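(* Let $\bm{Z}$ be a $p\times q$ matrix with rows $\bm{z}_1^T,\ldots,\bm{z}_p^T$, and let $\bm{U}$ be the submatrix consisting of the distinct rows of $\bm{Z}$; suppose $\bm{U}$ has $q$ rows and rank $q$. Let $m_j(\bm{\omega})=1/(1+e^{-\bm{z}_j^T\bm{\omega}})$, let $\bm{\omega}\sim N(\mathbf0,g(\bm{Z}^T\bm{Z}/p)^{-1})$ with $g>0$ (prior density $\pi(\bm{\omega})$), and let $f(\bm{\omega})=\sum_{\bm{\gamma}\in\{0,1\}^p}\pi(\bm{\gamma}\mid\bm{y},\bm{\omega}')\log\pi(\bm{\gamma}\mid\bm{\omega})$ with $\pi(\bm{\gamma}\mid\bm{\omega})=\prod_j\mathrm{Bern}(\gamma_j;m_j(\bm{\omega}))$ and a fixed posterior $\pi(\bm{\gamma}\mid\bm{y},\bm{\omega}')$ with inclusion probabilities $\hat\pi_i=\pi(\gamma_i=1\mid\bm{y},\bm{\omega}')$. Let $\tilde{\bm{Z}}=\bm{Z}\bm{U}^{-1}$ with entries $\tilde z_{ij}$, let $a_j=\sum_{i=1}^p\tilde z_{ij}\hat\pi_i\big/\sum_{i=1}^p\tilde z_{ij}$, and let $h(a,c)$ denote the solution $w$ of $1/(1+e^{-w})+w/c=a$. Define $\tilde\omega_j=h(a_j,gp)$ for $j=1,\ldots,q$ and $\hat{\bm{\omega}}=\bm{U}^{-1}\tilde{\bm{\omega}}$. Then $\nabla_{\bm{\omega}}f(\hat{\bm{\omega}})+\nabla_{\bm{\omega}}\log\pi(\hat{\bm{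\omega}})=\mathbf0$.
   Context: $\pi(\bm{\gamma}\mid\bm{y},\bm{\omega}')\propto p(\bm{y}\mid\bm{\gamma})\pi(\bm{\gamma}\mid\bm{\omega}')$ is the posterior over models at the current EM iterate $\bm{\omega}'$; $f$ plus $\log\pi(\bm{\omega})$ is the M-step objective. *)

theory Defs
  imports "HOL-Analysis.Analysis"
begin

definition logistic :: "real \<Rightarrow> real" where
  "logistic w = 1 / (1 + exp (- w))"

definition mprob :: "real^'q^'p \<Rightarrow> 'p \<Rightarrow> real^'q \<Rightarrow> real" where
  "mprob Z j \<omega> = logistic (Z $ j \<bullet> \<omega>)"

definition bern :: "bool \<Rightarrow> real \<Rightarrow> real" where
  "bern x m = (if x then m else 1 - m)"

definition prior_gamma :: "real^'q^'p \<Rightarrow> real^'q \<Rightarrow> ('p::finite \<Rightarrow> bool) \<Rightarrow> real" where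
  "prior_gamma Z \<omega> \<gamma> = (\<Prod>j\<in>UNIV. bern (\<gamma> j) (mprob Z j \<omega>))"

text \<open>Posterior pi(gamma | y, omega') proportional to p(y|gamma) pi(gamma|omega');
  lik gamma stands for p(y | gamma) with the data y fixed.\<close>
definition post_gamma ::
  "(('p::finite \<Rightarrow> bool) \<Rightarrow> real) \<Rightarrow> real^'q^'p \<Rightarrow> real^'q \<Rightarrow> ('p \<Rightarrow> bool) \<Rightarrow> real" where
  "post_gamma lik Z \<omega>' \<gamma> =
     lik \<gamma> * prior_gamma Z \<omega>' \<gamma> / (\<Sum>\<delta>\<in>UNIV. lik \<delta> * prior_gamma Z \<omega>' \<delta>)"

definition incl_prob ::
  "(('p::finite \<Rightarrow> bool) \<Rightarrow> real) \<Rightarrow> real^'q^'p \<Rightarrow> real^'q \<Rightarrow> 'p \<Rightarrow> real" where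
  "incl_prob lik Z \<omega>' i = (\<Sum>\<gamma>\<in>{\<gamma>. \<gamma> i}. post_gamma lik Z \<omega>' \<gamma>)"

definition Estep_f ::
  "(('p::finite \<Rightarrow> bool) \<Rightarrow> real) \<Rightarrow> real^'q^'p \<Rightarrow> real^'q \<Rightarrow> real^'q \<Rightarrow> real" where
  "Estep_f lik Z \<omega>' \<omega> = (\<Sum>\<gamma>\<in>UNIV. post_gamma lik Z \<omega>' \<gamma> * ln (prior_gamma Z \<omega> \<gamma>))"

definition mvn_density :: "real^'q^'q \<Rightarrow> real^'q \<Rightarrow> real" where
  "mvn_density S x =
     exp (- (1/2) * (x \<bullet> (matrix_inv S *v x))) / sqrt ((2 * pi) ^ CARD('q) * det S)"

definition prior_cov :: "real \<Rightarrow> real^'q^'p \<Rightarrow> real^'q^'q" where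
  "prior_cov g Z = g *\<^sub>R matrix_inv ((1 / real CARD('p)) *\<^sub>R (transpose Z ** Z))"

definition prior_omega :: "real \<Rightarrow> real^'q^'p \<Rightarrow> real^'q \<Rightarrow> real" where
  "prior_omega g Z \<omega> = mvn_density (prior_cov g Z) \<omega>"

definition hsol :: "real \<Rightarrow> real \<Rightarrow> real" where
  "hsol a c = (THE w. logistic w + w / c = a)"

end

theory Submission
  imports Defs
begin

(* Since U is invertible and its rows are exactly the distinct rows of Z, we can write
   Z = P U, where P is the 0/1 matrix selecting for each row of Z the row of U equal to it.
   Then Z U^-1 = P, so a_j is the mean of the inclusion probabilities over the rows of Z equal
   to u_j.  The gradient of f is Z^T (pihat - m(omega)) and that of log pi(omega) is
   -Z^T Z omega / (g p).  At omega-hat we have Z omega-hat = P omega-tilde, so by the defining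
   equation of h the i-th entry of pihat - m - Z omega-hat / (g p) is pihat_i minus the mean of
   pihat over the class of row i; these residuals sum to zero over every class, so P^T, and hence
   Z^T = U^T P^T, annihilates them. *)

lemma logistic_pos: "0 < logistic t"
  unfolding logistic_def by (simp add: add_pos_pos)

lemma logistic_less_one: "logistic t < 1"
  unfolding logistic_def by (simp add: add_pos_pos)

lemma one_minus_logistic: "1 - logistic t = logistic (- t)"
proof -
  have "0 < 1 + exp t" by (simp add: add_pos_pos)
  then show ?thesis unfolding logistic_def by (simp add: exp_minus field_simps)
qed

lemma strict_mono_logistic: "strict_mono logistic"
  unfolding strict_mono_def logistic_def
  by (auto intro!: divide_strict_left_mono add_pos_pos mult_pos_pos)

lemma isCont_logistic: "isCont logistic t"
proof -
  have "0 < 1 + exp (- t)" by (simp add: add_pos_pos)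
  then show ?thesis unfolding logistic_def by (auto intro!: continuous_intros)
qed

lemma has_real_derivative_ln_logistic:
  "((\<lambda>t. ln (logistic t)) has_real_derivative 1 - logistic t) (at t)"
proof -
  have pos: "0 < 1 + exp (- u)" for u :: real by (simp add: add_pos_pos)
  have "(\<lambda>t. ln (logistic t)) = (\<lambda>t. - ln (1 + exp (- t)))"
    by (simp add: logistic_def ln_div pos fun_eq_iff)
  moreover have "1 - logistic t = exp (- t) / (1 + exp (- t))"
    unfolding logistic_def using pos[of t] by (simp add: field_simps)
  ultimately show ?thesis
    using pos[of t] by (auto intro!: derivative_eq_intros)
qed

lemma has_real_derivative_ln_bern_logistic:
  "((\<lambda>t. ln (bern b (logistic t))) has_real_derivative of_bool b - logistic t) (at t)"
proof (cases b)
  case True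
  then show ?thesis using has_real_derivative_ln_logistic by (simp add: bern_def)
next
  case False
  have "((\<lambda>t. ln (logistic (- t))) has_real_derivative - (1 - logistic (- t))) (at t)"
    using DERIV_chain2[OF has_real_derivative_ln_logistic DERIV_minus[OF DERIV_ident]] by simp
  then show ?thesis using False by (simp add: bern_def one_minus_logistic)
qed

lemma hsol_eq:
  assumes "c > 0"
  shows "logistic (hsol a c) + hsol a c / c = a"
proof -
  let ?f = "\<lambda>w. logistic w + w / c"
  have "?f (c * (a - 1)) \<le> a" "a \<le> ?f (c * a)" "c * (a - 1) \<le> c * a"
    using logistic_pos logistic_less_one assms by (auto simp: less_imp_le)
  moreover have "isCont ?f x" for x
    using isCont_logistic assms by (auto intro!: continuous_intros)
  ultimately obtain w where w: "?f w = a"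
    using IVT[of ?f "c * (a - 1)" a "c * a"] by blast
  have "strict_mono ?f"
    using strict_mono_logistic assms
    by (auto simp: strict_mono_def intro: add_strict_mono divide_strict_right_mono)
  then have "\<exists>!w. ?f w = a"
    using w strict_mono_eq by metis
  then show ?thesis
    unfolding hsol_def by (rule theI')
qed

lemma bern_logistic_pos: "0 < bern b (logistic t)"
  using logistic_pos logistic_less_one by (simp add: bern_def)

lemma ln_prior_gamma:
  "ln (prior_gamma Z \<omega> \<gamma>) = (\<Sum>j\<in>UNIV. ln (bern (\<gamma> j) (logistic (Z $ j \<bullet> \<omega>))))"
  unfolding prior_gamma_def mprob_def
  by (rule ln_prod) (simp_all add: less_imp_neq[OF bern_logistic_pos, symmetric])

lemma sum_post_gamma:
  assumes "(\<Sum>\<delta>\<in>UNIV. lik \<delta> * prior_gamma Z \<omega>' \<delta>) \<noteq> 0"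
  shows "(\<Sum>\<gamma>\<in>UNIV. post_gamma lik Z \<omega>' \<gamma>) = 1"
  unfolding post_gamma_def using assms by (simp flip: sum_divide_distrib)

lemma incl_prob_eq_expectation:
  "incl_prob lik Z \<omega>' j = (\<Sum>\<gamma>\<in>UNIV. post_gamma lik Z \<omega>' \<gamma> * of_bool (\<gamma> j))"
  by (simp add: incl_prob_def sum.If_cases)

lemma has_derivative_ln_bern_logistic_inner:
  "((\<lambda>\<omega>. ln (bern b (logistic (z \<bullet> \<omega>)))) has_derivative
     (\<lambda>v. (of_bool b - logistic (z \<bullet> \<omega>)) * (z \<bullet> v))) (at \<omega>)"
proof -
  have "((\<lambda>\<omega>. z \<bullet> \<omega>) has_derivative (\<lambda>v. z \<bullet> v)) (at \<omega>)"
    by (auto intro!: derivative_eq_intros)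
  from has_derivative_compose[OF this
      has_real_derivative_ln_bern_logistic[unfolded has_field_derivative_def]]
  show ?thesis by (simp add: mult.commute)
qed

lemma Estep_f_has_derivative:
  assumes "(\<Sum>\<delta>\<in>UNIV. lik \<delta> * prior_gamma Z \<omega>' \<delta>) \<noteq> 0"
  shows "(Estep_f lik Z \<omega>' has_derivative
           (\<lambda>v. (transpose Z *v (\<chi> j. incl_prob lik Z \<omega>' j - mprob Z j \<omega>)) \<bullet> v)) (at \<omega>)"
proof -
  let ?P = "post_gamma lik Z \<omega>'" and ?m = "\<lambda>j. logistic (Z $ j \<bullet> \<omega>)"
  have "(Estep_f lik Z \<omega>' has_derivative
          (\<lambda>v. \<Sum>\<gamma>\<in>UNIV. ?P \<gamma> * (\<Sum>j\<in>UNIV. (of_bool (\<gamma> j) - ?m j) * (Z $ j \<bullet> v)))) (at \<omega>)"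
    unfolding Estep_f_def ln_prior_gamma
    by (intro has_derivative_sum has_derivative_mult_right has_derivative_ln_bern_logistic_inner)
  moreover have "(\<Sum>\<gamma>\<in>UNIV. ?P \<gamma> * (\<Sum>j\<in>UNIV. (of_bool (\<gamma> j) - ?m j) * (Z $ j \<bullet> v)))
      = (transpose Z *v (\<chi> j. incl_prob lik Z \<omega>' j - mprob Z j \<omega>)) \<bullet> v" for v
  proof -
    have "(\<Sum>\<gamma>\<in>UNIV. ?P \<gamma> * (\<Sum>j\<in>UNIV. (of_bool (\<gamma> j) - ?m j) * (Z $ j \<bullet> v)))
        = (\<Sum>j\<in>UNIV. \<Sum>\<gamma>\<in>UNIV. (?P \<gamma> * of_bool (\<gamma> j) - ?P \<gamma> * ?m j) * (Z $ j \<bullet> v))"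
      by (subst sum.swap) (simp add: sum_distrib_left algebra_simps)
    also have "\<dots> = (\<Sum>j\<in>UNIV.
        ((\<Sum>\<gamma>\<in>UNIV. ?P \<gamma> * of_bool (\<gamma> j)) - (\<Sum>\<gamma>\<in>UNIV. ?P \<gamma>) * ?m j) * (Z $ j \<bullet> v))"
      by (simp add: sum_subtractf flip: sum_distrib_right)
    also have "\<dots> = (\<chi> j. incl_prob lik Z \<omega>' j - mprob Z j \<omega>) \<bullet> (Z *v v)"
      by (simp add: sum_post_gamma[OF assms] incl_prob_eq_expectation mprob_def inner_vec_def
          matrix_vector_mult_def)
    also have "\<dots> = (transpose Z *v (\<chi> j. incl_prob lik Z \<omega>' j - mprob Z j \<omega>)) \<bullet> v"
      by (simp add: dot_lmul_matrix)
    finally show ?thesis .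
  qed
  ultimately show ?thesis by simp
qed

lemma matrix_inv_eqI:
  fixes A B :: "'a::field^'n^'n"
  assumes "A ** B = mat 1"
  shows "matrix_inv A = B"
proof -
  have BA: "B ** A = mat 1" using assms matrix_left_right_inverse by blast
  have "A ** matrix_inv A = mat 1 \<and> matrix_inv A ** A = mat 1"
    unfolding matrix_inv_def by (rule someI[where x = B]) (use assms BA in blast)
  then have "matrix_inv A ** A = mat 1" ..
  then have "matrix_inv A ** (A ** B) = B" by (simp add: matrix_mul_assoc)
  then show ?thesis using assms by simp
qed

lemma matrix_inv_right:
  fixes A :: "'a::field^'n^'n"
  assumes "invertible A"
  shows "A ** matrix_inv A = mat 1"
proof -
  obtain B where "A ** B = mat 1" using assms invertible_def by blast
  then show ?thesis using matrix_inv_eqI by metis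
qed

lemma matrix_inv_left:
  fixes A :: "'a::field^'n^'n"
  assumes "invertible A"
  shows "matrix_inv A ** A = mat 1"
  using matrix_inv_right[OF assms] by (simp add: matrix_left_right_inverse)

lemma matrix_inv_scaleR:
  fixes A :: "real^'n^'n"
  assumes "invertible A" "c \<noteq> 0"
  shows "matrix_inv (c *\<^sub>R A) = inverse c *\<^sub>R matrix_inv A"
  by (rule matrix_inv_eqI)
     (simp only: matrix_scalar_ac matrix_inv_right[OF assms(1)] scaleR_scaleR left_inverse[OF assms(2)]
       scaleR_one flip: scalar_matrix_assoc)

lemma det_matrix_inv:
  fixes A :: "real^'n^'n"
  assumes "invertible A"
  shows "det (matrix_inv A) = inverse (det A)"
  using det_mul[of A "matrix_inv A"] matrix_inv_right[OF assms]
  by (simp add: det_I inverse_unique)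

lemma det_scaleR:
  fixes A :: "real^'n^'n"
  shows "det (c *\<^sub>R A) = c ^ CARD('n) * det A"
proof -
  have "c *\<^sub>R A = mat c ** A"
    by (simp add: vec_eq_iff matrix_matrix_mult_def mat_def if_distrib[where f="\<lambda>x. x * _"] cong: if_cong)
  then have "det (c *\<^sub>R A) = det (mat c :: real^'n^'n) * det A"
    by (simp only: det_mul)
  moreover have "det (mat c :: real^'n^'n) = c ^ CARD('n)"
    by (subst det_diagonal) (auto simp: mat_def)
  ultimately show ?thesis by simp
qed

lemma prior_cov_eq:
  fixes Z :: "real^'q^'p"
  assumes "invertible (transpose Z ** Z)"
  shows "prior_cov g Z = (g * CARD('p)) *\<^sub>R matrix_inv (transpose Z ** Z)"
proof -
  have "matrix_inv ((1 / CARD('p)) *\<^sub>R (transpose Z ** Z)) = CARD('p) *\<^sub>R matrix_inv (transpose Z ** Z)"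
    using matrix_inv_scaleR[OF assms, of "1 / CARD('p)"] by simp
  then show ?thesis by (simp add: prior_cov_def)
qed

lemma matrix_inv_prior_cov:
  fixes Z :: "real^'q^'p"
  assumes "invertible (transpose Z ** Z)" "g \<noteq> 0"
  shows "matrix_inv (prior_cov g Z) = (1 / (g * CARD('p))) *\<^sub>R (transpose Z ** Z)"
proof (rule matrix_inv_eqI)
  have "g * CARD('p) \<noteq> 0" using assms by simp
  then show "prior_cov g Z ** ((1 / (g * CARD('p))) *\<^sub>R (transpose Z ** Z)) = mat 1"
    by (simp only: prior_cov_eq[OF assms(1)] matrix_scalar_ac matrix_inv_left[OF assms(1)] scaleR_scaleR
        flip: scalar_matrix_assoc) simp
qed

lemma det_prior_cov_pos:
  fixes Z :: "real^'q^'p"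
  assumes "det (transpose Z ** Z) > 0" "g > 0"
  shows "det (prior_cov g Z) > 0"
proof -
  have "invertible (transpose Z ** Z)" using assms invertible_det_nz by force
  then have "det (prior_cov g Z) = (g * CARD('p)) ^ CARD('q) * inverse (det (transpose Z ** Z))"
    by (simp only: prior_cov_eq det_scaleR det_matrix_inv)
  then show ?thesis
    using assms by simp
qed

lemma ln_prior_omega_has_derivative:
  fixes Z :: "real^'q^'p"
  assumes "det (transpose Z ** Z) > 0" "g > 0"
  shows "((\<lambda>\<omega>. ln (prior_omega g Z \<omega>)) has_derivative
           (\<lambda>v. (- (1 / (g * CARD('p))) *\<^sub>R (transpose Z *v (Z *v \<omega>))) \<bullet> v)) (at \<omega>)"
proof -
  define C where "C = sqrt ((2 * pi) ^ CARD('q) * det (prior_cov g Z))"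
  have "C > 0" unfolding C_def using det_prior_cov_pos[OF assms] by simp
  have inv: "invertible (transpose Z ** Z)" using assms invertible_det_nz by force
  have ln_prior: "ln (prior_omega g Z \<omega>) =
      - (1 / (2 * (g * CARD('p)))) * ((Z *v \<omega>) \<bullet> (Z *v \<omega>)) - ln C" for \<omega>
  proof -
    have "\<omega> \<bullet> ((transpose Z ** Z) *v \<omega>) = (Z *v \<omega>) \<bullet> (Z *v \<omega>)"
      by (subst inner_commute) (simp add: dot_lmul_matrix flip: matrix_vector_mul_assoc)
    then have "prior_omega g Z \<omega> = exp (- ((Z *v \<omega>) \<bullet> (Z *v \<omega>)) / (2 * (g * CARD('p)))) / C"
      unfolding prior_omega_def mvn_density_def C_def
        matrix_inv_prior_cov[OF inv less_imp_neq[OF assms(2), symmetric]]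
      by (simp flip: scaleR_matrix_vector_assoc)
    then show ?thesis using \<open>C > 0\<close> by (simp add: ln_div)
  qed
  have lin: "((*v) Z has_derivative (*v) Z) (at \<omega>)"
    by (simp add: bounded_linear_imp_has_derivative)
  have "(Z *v \<omega>) \<bullet> (Z *v v) + (Z *v v) \<bullet> (Z *v \<omega>) = 2 * ((transpose Z *v (Z *v \<omega>)) \<bullet> v)" for v
    by (simp add: dot_lmul_matrix inner_commute[of "Z *v v"])
  then have sq: "((\<lambda>\<omega>. (Z *v \<omega>) \<bullet> (Z *v \<omega>)) has_derivative
                   (\<lambda>v. 2 * ((transpose Z *v (Z *v \<omega>)) \<bullet> v))) (at \<omega>)"
    using has_derivative_inner[OF lin lin] by simp
  show ?thesis
    unfolding ln_prior
    by (rule has_derivative_eq_rhs[OF has_derivative_diff[OF has_derivative_mult_right[OF sq] has_derivative_const]])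
       (simp add: fun_eq_iff)
qed

definition row_selector :: "('p \<Rightarrow> 'q) \<Rightarrow> real^'q^'p" where
  "row_selector \<sigma> = (\<chi> i k. of_bool (\<sigma> i = k))"

lemma row_selector_mult_vec: "row_selector \<sigma> *v x = (\<chi> i. x $ \<sigma> i)"
  by (simp add: row_selector_def matrix_vector_mult_def vec_eq_iff)

lemma row_selector_mult: "row_selector \<sigma> ** A = (\<chi> i. A $ \<sigma> i)"
  by (simp add: row_selector_def matrix_matrix_mult_def vec_eq_iff)

lemma transpose_row_selector_mult_vec:
  "(transpose (row_selector \<sigma>) *v y) $ k = (\<Sum>i | \<sigma> i = k. y $ i)"
  by (simp add: row_selector_def matrix_vector_mult_def transpose_def)

lemma det_gram_row_selector:
  "det (transpose (row_selector \<sigma>) ** row_selector \<sigma>) = (\<Prod>k\<in>UNIV. real (card {i. \<sigma> i = k}))"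
proof -
  have "transpose (row_selector \<sigma>) ** row_selector \<sigma> =
        (\<chi> k l. if k = l then real (card {i. \<sigma> i = k}) else 0)"
    by (auto simp: row_selector_def matrix_matrix_mult_def transpose_def vec_eq_iff simp flip: of_bool_conj)
  then show ?thesis by (simp add: det_diagonal)
qed

definition fibre_mean :: "('p \<Rightarrow> 'q) \<Rightarrow> real^'p \<Rightarrow> real^'q" where
  "fibre_mean \<sigma> y = (\<chi> k. (\<Sum>i | \<sigma> i = k. y $ i) / card {i. \<sigma> i = k})"

lemma transpose_row_selector_fibre_mean:
  "transpose (row_selector \<sigma>) *v (y - row_selector \<sigma> *v fibre_mean \<sigma> y) = 0"
proof -
  have "(\<Sum>i | \<sigma> i = k. y $ i - fibre_mean \<sigma> y $ k) = 0" for k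
    by (cases "card {i. \<sigma> i = k} = 0") (simp_all add: fibre_mean_def sum_subtractf)
  then show ?thesis
    by (simp add: vec_eq_iff transpose_row_selector_mult_vec row_selector_mult_vec del: transpose_matrix_vector)
qed

lemma obtain_row_selector:
  fixes Z :: "real^'q^'p" and U :: "real^'q^'q"
  assumes "inj (\<lambda>k. U $ k)" "range (\<lambda>k. U $ k) = range (\<lambda>i. Z $ i)"
  obtains \<sigma> where "Z = row_selector \<sigma> ** U" "surj \<sigma>"
proof
  define \<sigma> where "\<sigma> i = inv (\<lambda>k. U $ k) (Z $ i)" for i
  have rows: "U $ \<sigma> i = Z $ i" for i
    unfolding \<sigma>_def using assms(2) by (metis f_inv_into_f rangeI)
  then show "Z = row_selector \<sigma> ** U"
    by (simp add: row_selector_mult vec_eq_iff)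
  have "\<exists>i. \<sigma> i = k" for k
  proof -
    obtain i where "Z $ i = U $ k" using assms(2) by (metis rangeE rangeI)
    then show ?thesis using rows assms(1) by (metis injD)
  qed
  then show "surj \<sigma>" by (metis surj_def)
qed

lemma det_gram_pos:
  fixes U :: "real^'q^'q"
  assumes "Z = row_selector \<sigma> ** U" "surj \<sigma>" "invertible U"
  shows "det (transpose Z ** Z) > 0"
proof -
  let ?P = "row_selector \<sigma>"
  have "transpose Z ** Z = transpose U ** (transpose ?P ** ?P) ** U"
    by (simp add: assms(1) matrix_transpose_mul matrix_mul_assoc)
  then have "det (transpose Z ** Z) = det (transpose ?P ** ?P) * (det U)\<^sup>2"
    by (simp add: det_mul det_transpose power2_eq_square)
  moreover have "det (transpose ?P ** ?P) > 0"
    using assms(2) by (auto simp: det_gram_row_selector card_gt_0_iff intro!: prod_pos) (metis surjD)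
  moreover have "det U \<noteq> 0" using assms(3) invertible_det_nz by blast
  ultimately show ?thesis by simp
qed

lemma hsol_fibre_mean_score_eq_0:
  fixes U :: "real^'q^'q" and y :: "real^'p"
  assumes "Z = row_selector \<sigma> ** U" "invertible U" "c > 0"
  defines "\<omega> \<equiv> matrix_inv U *v (\<chi> k. hsol (fibre_mean \<sigma> y $ k) c)"
  shows "transpose Z *v (y - (\<chi> i. logistic (Z $ i \<bullet> \<omega>)) - (1 / c) *\<^sub>R (Z *v \<omega>)) = 0"
proof -
  let ?P = "row_selector \<sigma>" and ?w = "\<chi> k. hsol (fibre_mean \<sigma> y $ k) c"
  have "Z *v \<omega> = ?P *v ?w"
    by (simp add: assms(1) \<omega>_def matrix_vector_mul_assoc matrix_inv_right[OF assms(2)] flip: matrix_mul_assoc)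
  then have score:
    "y - (\<chi> i. logistic (Z $ i \<bullet> \<omega>)) - (1 / c) *\<^sub>R (Z *v \<omega>) = y - ?P *v fibre_mean \<sigma> y"
    using hsol_eq[OF assms(3)]
    by (simp add: vec_eq_iff row_selector_mult_vec matrix_vector_mul_component[symmetric] algebra_simps)
  have "transpose Z = transpose U ** transpose ?P"
    by (simp add: assms(1) matrix_transpose_mul)
  then show ?thesis
    unfolding score
    by (simp only: transpose_row_selector_fibre_mean matrix_vector_mult_0_right flip: matrix_vector_mul_assoc)
qed

theorem proposition1:
  fixes Z :: "real^'q^'p"
    and U :: "real^'q^'q"
    and g :: real
    and lik :: "('p \<Rightarrow> bool) \<Rightarrow> real"
    and \<omega>' :: "real^'q"
  assumes U_distinct: "inj (\<lambda>k. U $ k)"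
    and U_rows: "range (\<lambda>k. U $ k) = range (\<lambda>i. Z $ i)"
    and U_rank: "rank U = CARD('q)"
    and g_pos: "g > 0"
    and lik_nonneg: "\<And>\<gamma>. lik \<gamma> \<ge> 0"
    and lik_norm: "(\<Sum>\<delta>\<in>UNIV. lik \<delta> * prior_gamma Z \<omega>' \<delta>) > 0"
  shows
    "let Zt = Z ** matrix_inv U;
         pihat = incl_prob lik Z \<omega>';
         a = (\<lambda>j. (\<Sum>i\<in>UNIV. Zt $ i $ j * pihat i) / (\<Sum>i\<in>UNIV. Zt $ i $ j));
         \<omega>t = (\<chi> j. hsol (a j) (g * real CARD('p)));
         \<omega>hat = matrix_inv U *v \<omega>t
     in \<exists>Gf Gp :: real^'q.
          (Estep_f lik Z \<omega>' has_derivative (\<lambda>v. Gf \<bullet> v)) (at \<omega>hat) \<and>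
          ((\<lambda>\<omega>. ln (prior_omega g Z \<omega>)) has_derivative (\<lambda>v. Gp \<bullet> v)) (at \<omega>hat) \<and>
          Gf + Gp = 0"
proof -
  obtain \<sigma> where Z: "Z = row_selector \<sigma> ** U" and "surj \<sigma>"
    using obtain_row_selector[OF U_distinct U_rows] .
  have invU: "invertible U"
    using U_rank by (simp add: invertible_det_nz det_eq_0_rank)
  define pihat where "pihat = (\<chi> i. incl_prob lik Z \<omega>' i)"
  define \<omega>hat where "\<omega>hat = matrix_inv U *v (\<chi> k. hsol (fibre_mean \<sigma> pihat $ k) (g * CARD('p)))"
  have "Z ** matrix_inv U = row_selector \<sigma>"
    by (simp add: Z matrix_inv_right[OF invU] flip: matrix_mul_assoc)
  then have a: "(\<Sum>i\<in>UNIV. (Z ** matrix_inv U) $ i $ k * incl_prob lik Z \<omega>' i) /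
      (\<Sum>i\<in>UNIV. (Z ** matrix_inv U) $ i $ k) = fibre_mean \<sigma> pihat $ k" for k
    by (simp add: row_selector_def fibre_mean_def pihat_def)
  have score: "transpose Z *v
      (pihat - (\<chi> i. logistic (Z $ i \<bullet> \<omega>hat)) - (1 / (g * CARD('p))) *\<^sub>R (Z *v \<omega>hat)) = 0"
    using hsol_fibre_mean_score_eq_0[OF Z invU] g_pos unfolding \<omega>hat_def by simp
  have "(\<chi> j. incl_prob lik Z \<omega>' j - mprob Z j \<omega>hat) = pihat - (\<chi> i. logistic (Z $ i \<bullet> \<omega>hat))"
    by (simp add: vec_eq_iff pihat_def mprob_def)
  then have "transpose Z *v (\<chi> j. incl_prob lik Z \<omega>' j - mprob Z j \<omega>hat)
      + - (1 / (g * CARD('p))) *\<^sub>R (transpose Z *v (Z *v \<omega>hat)) = 0"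
    using score by (simp add: matrix_vector_mult_diff_distrib matrix_vector_mult_scaleR)
  then show ?thesis
    using Estep_f_has_derivative[OF lik_norm[THEN less_imp_neq, THEN not_sym], of \<omega>hat]
      ln_prior_omega_has_derivative[OF det_gram_pos[OF Z \<open>surj \<sigma>\<close> invU] g_pos, of \<omega>hat]
    unfolding Let_def a \<omega>hat_def[symmetric] by blast
qed

end
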